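(* Let $G$ be a finite simple graph of order $n$ and size $m$ without isolated vertices, with minimum degree $\delta$ and maximum degree $\Delta$, and let $n_e$ be the number of vertices of even degree in $G$. Then (i) $\gamma_{st}(G)\geq \dfrac{\left(\lfloor\frac{\delta}{2}\rfloor-\lceil\frac{\Delta}{2}\rceil+2\right)n}{\lfloor\frac{\delta}{2}\rfloor+\lceil\frac{\Delta}{2}\rceil}$; (ii) $\gamma_{st}(G)\geq \dfrac{\left(5-3\Delta-2\lceil\frac{\Delta}{2}\rceil\right)n+2n_e+8m}{3\Delta+2\lceil\frac{\Delta}{2}\rceil-1}$; (iii) $\gamma_{st}(G)\geq \dfrac{\left(5+3\delta-2\lceil\frac{\Delta}{2}\rceil\right)n+2n_e-4m}{3\delta+2\lceil\frac{\Delta}{2}\rceil-1}$; and these bounds are sharp.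
   Context: For a vertex $v$, $N(v)$ is its open neighborhood. A signed total dominating function (STDF) of $G$ is a function $f:V(G)\to\{-1,1\}$ such that $\sum_{u\in N(v)}f(u)\geq 1$ for every vertex $v$; the signed total domination number $\gamma_{st}(G)$ is the minimum of $\sum_{v\in V(G)}f(v)$ over all STDFs $f$ of $G$. *)

theory Defs
  imports Complex_Main
begin

definition simple_graph :: "'a set \<Rightarrow> ('a \<Rightarrow> 'a \<Rightarrow> bool) \<Rightarrow> bool" where
  "simple_graph V E \<longleftrightarrow> finite V \<and>
     (\<forall>u v. E u v \<longrightarrow> u \<in> V \<and> v \<in> V) \<and>
     (\<forall>u v. E u v \<longrightarrow> E v u) \<and> (\<forall>v. \<not> E v v)"

definition nbhd :: "'a set \<Rightarrow> ('a \<Rightarrow> 'a \<Rightarrow> bool) \<Rightarrow> 'a \<Rightarrow> 'a set" where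
  "nbhd V E v = {u \<in> V. E v u}"

definition degree :: "'a set \<Rightarrow> ('a \<Rightarrow> 'a \<Rightarrow> bool) \<Rightarrow> 'a \<Rightarrow> nat" where
  "degree V E v = card (nbhd V E v)"

definition min_degree :: "'a set \<Rightarrow> ('a \<Rightarrow> 'a \<Rightarrow> bool) \<Rightarrow> nat" where
  "min_degree V E = Min (degree V E ` V)"

definition max_degree :: "'a set \<Rightarrow> ('a \<Rightarrow> 'a \<Rightarrow> bool) \<Rightarrow> nat" where
  "max_degree V E = Max (degree V E ` V)"

definition num_edges :: "'a set \<Rightarrow> ('a \<Rightarrow> 'a \<Rightarrow> bool) \<Rightarrow> nat" where
  "num_edges V E = card {{u, v} | u v. u \<in> V \<and> v \<in> V \<and> E u v}"

definition num_even_deg :: "'a set \<Rightarrow> ('a \<Rightarrow> 'a \<Rightarrow> bool) \<Rightarrow> nat" where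
  "num_even_deg V E = card {v \<in> V. even (degree V E v)}"

definition no_isolated :: "'a set \<Rightarrow> ('a \<Rightarrow> 'a \<Rightarrow> bool) \<Rightarrow> bool" where
  "no_isolated V E \<longleftrightarrow> (\<forall>v\<in>V. nbhd V E v \<noteq> {})"

text \<open>Signed total dominating function (values -1/1 on V; fixed to 1 outside V
  so that distinct functions on V are distinct as HOL functions).\<close>
definition is_STDF :: "'a set \<Rightarrow> ('a \<Rightarrow> 'a \<Rightarrow> bool) \<Rightarrow> ('a \<Rightarrow> int) \<Rightarrow> bool" where
  "is_STDF V E f \<longleftrightarrow> (\<forall>v\<in>V. f v = -1 \<or> f v = 1) \<and> (\<forall>v. v \<notin> V \<longrightarrow> f v = 1) \<and>
     (\<forall>v\<in>V. (\<Sum>u\<in>nbhd V E v. f u) \<ge> 1)"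

definition gamma_st :: "'a set \<Rightarrow> ('a \<Rightarrow> 'a \<Rightarrow> bool) \<Rightarrow> int" where
  "gamma_st V E = Min {(\<Sum>v\<in>V. f v) | f. is_STDF V E f}"

end

theory Submission
  imports Defs
begin

text \<open>Fix an STDF \<open>f\<close> of minimum weight and split \<open>V\<close> into the vertices \<open>P\<close> with \<open>f = 1\<close> and
  \<open>M\<close> with \<open>f = -1\<close>, so that \<open>\<gamma>\<^sub>s\<^sub>t = |P| - |M|\<close> and \<open>n = |P| + |M|\<close>. Every vertex has strictly
  more neighbours in \<open>P\<close> than in \<open>M\<close>, and at least two more if its degree is even. Hence a
  vertex of \<open>M\<close> has at least \<open>\<lfloor>\<delta>/2\<rfloor> + 1\<close> neighbours in \<open>P\<close>, while a vertex of \<open>P\<close> has at most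
  \<open>\<lceil>\<Delta>/2\<rceil> - 1\<close> neighbours in \<open>M\<close>. Counting the edges between \<open>P\<close> and \<open>M\<close> from both sides, together
  with the degree sums over \<open>P\<close> and \<open>M\<close> and the handshake lemma, gives linear inequalities in
  \<open>|P|\<close> and \<open>|M|\<close> from which the three bounds follow. The complete graph \<open>K\<^sub>2\<close> attains all three.\<close>

lemma sum_card_nbhd_swap:
  assumes "finite A" "finite B" "\<And>u v. E u v \<Longrightarrow> E v u"
  shows "(\<Sum>v\<in>A. card (nbhd B E v)) = (\<Sum>u\<in>B. card (nbhd A E u))"
proof -
  have "(\<Sum>v\<in>A. card (nbhd B E v)) = (\<Sum>v\<in>A. \<Sum>u\<in>{u\<in>B. E v u}. (1::nat))"
    by (simp add: nbhd_def)
  also have "\<dots> = (\<Sum>u\<in>B. \<Sum>v\<in>{v\<in>A. E v u}. (1::nat))"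
    using sum.swap_restrict[OF assms(1,2), of "\<lambda>_ _. (1::nat)" E] by simp
  also have "\<dots> = (\<Sum>u\<in>B. card (nbhd A E u))"
    using assms(3) by (intro sum.cong refl) (auto simp: nbhd_def intro!: arg_cong[where f=card])
  finally show ?thesis .
qed

lemma sum_degree_eq_twice_num_edges:
  assumes "simple_graph V E"
  shows "(\<Sum>v\<in>V. degree V E v) = 2 * num_edges V E"
proof -
  from assms have fin: "finite V" and sym: "\<And>u v. E u v \<Longrightarrow> E v u" and irr: "\<And>v. \<not> E v v"
    unfolding simple_graph_def by auto
  define D where "D = Sigma V (\<lambda>u. {v\<in>V. E u v})"
  define h where "h = (\<lambda>p::'a\<times>'a. {fst p, snd p})"
  have finD: "finite D" using fin unfolding D_def by auto
  have hD: "h ` D = {{u, v} | u v. u \<in> V \<and> v \<in> V \<and> E u v}"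
    unfolding D_def h_def by (auto simp: image_iff; blast)
  have "(\<Sum>v\<in>V. degree V E v) = card D"
    unfolding D_def degree_def nbhd_def using fin by simp
  also have "card D = (\<Sum>e\<in>h ` D. card {p\<in>D. h p = e})"
    using sum.image_gen[OF finD, of "\<lambda>_. 1::nat" h] by simp
  also have "\<dots> = (\<Sum>e\<in>h ` D. 2)"
  proof (rule sum.cong[OF refl])
    fix e assume "e \<in> h ` D"
    then obtain u v where uv: "u \<in> V" "v \<in> V" "E u v" and e: "e = {u, v}"
      unfolding D_def h_def by auto
    have "u \<noteq> v" using irr uv by auto
    have "{p\<in>D. h p = e} = {(u, v), (v, u)}"
      using uv sym e unfolding D_def h_def by (auto simp: doubleton_eq_iff)
    then show "card {p\<in>D. h p = e} = 2" using \<open>u \<noteq> v\<close> by simp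
  qed
  finally show ?thesis unfolding num_edges_def hD by simp
qed

lemma min_degree_le_degree: "finite V \<Longrightarrow> v \<in> V \<Longrightarrow> min_degree V E \<le> degree V E v"
  unfolding min_degree_def by simp

lemma degree_le_max_degree: "finite V \<Longrightarrow> v \<in> V \<Longrightarrow> degree V E v \<le> max_degree V E"
  unfolding max_degree_def by simp

lemma min_degree_pos:
  assumes "finite V" "V \<noteq> {}" "no_isolated V E"
  shows "0 < min_degree V E"
proof -
  have "min_degree V E \<in> degree V E ` V"
    unfolding min_degree_def using assms(1,2) by simp
  moreover have "0 < degree V E v" if "v \<in> V" for v
    using assms(1,3) that by (auto simp: no_isolated_def degree_def nbhd_def card_gt_0_iff)
  ultimately show ?thesis by auto
qed

lemma min_degree_le_max_degree:
  assumes "finite V" "V \<noteq> {}"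
  shows "min_degree V E \<le> max_degree V E"
proof -
  obtain v where "v \<in> V" using assms(2) by blast
  then show ?thesis using min_degree_le_degree degree_le_max_degree assms(1) le_trans by metis
qed

lemma gamma_st_attained:
  assumes "simple_graph V E" "no_isolated V E"
  obtains f where "is_STDF V E f" "gamma_st V E = (\<Sum>v\<in>V. f v)"
proof -
  from assms(1) have fin: "finite V" unfolding simple_graph_def by auto
  let ?S = "{(\<Sum>v\<in>V. f v) | f. is_STDF V E f}"
  have "is_STDF V E (\<lambda>_. 1)"
    unfolding is_STDF_def
  proof (intro conjI ballI allI impI)
    fix v assume "v \<in> V"
    then have "nbhd V E v \<noteq> {}" using assms(2) unfolding no_isolated_def by auto
    moreover have "finite (nbhd V E v)" using fin unfolding nbhd_def by auto
    ultimately show "(\<Sum>u\<in>nbhd V E v. (1::int)) \<ge> 1"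
      by (simp add: Suc_le_eq card_gt_0_iff)
  qed auto
  then have "?S \<noteq> {}" by blast
  moreover have "?S \<subseteq> {- int (card V) .. int (card V)}"
  proof
    fix s assume "s \<in> ?S"
    then obtain f where f: "is_STDF V E f" and s: "s = (\<Sum>v\<in>V. f v)" by auto
    have b: "\<And>v. v \<in> V \<Longrightarrow> -1 \<le> f v \<and> f v \<le> 1" using f unfolding is_STDF_def by force
    have "(\<Sum>v\<in>V. f v) \<le> of_nat (card V) * 1" by (rule sum_bounded_above) (use b in auto)
    moreover have "of_nat (card V) * (-1) \<le> (\<Sum>v\<in>V. f v)" by (rule sum_bounded_below) (use b in auto)
    ultimately show "s \<in> {- int (card V) .. int (card V)}" using s by simp
  qed
  then have "finite ?S" by (rule finite_subset) simp
  ultimately have "Min ?S \<in> ?S" by (intro Min_in)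
  then show ?thesis using that unfolding gamma_st_def by auto
qed

lemma less_add_parity_le: "(b::nat) < a \<Longrightarrow> b + 1 + (if even (a + b) then 1 else 0) \<le> a"
  by (auto simp: even_add) presburger+

text \<open>The three bounds are linear consequences of the counting inequalities once the products
  \<open>p * c\<close>, \<open>q * (a + 1)\<close>, \<dots> are read as atoms: the difference of the two sides is twice a
  quantity that \<open>linarith\<close> bounds below by \<open>0\<close>.\<close>
lemma le_of_diff_eq_double_nonneg: "(T::real) - L = 2 * W \<Longrightarrow> 0 \<le> W \<Longrightarrow> L \<le> T"
  by linarith

lemma weight_bound_i_arith:
  fixes p q a c x :: real
  assumes "q * (a + 1) \<le> x" "x + p \<le> p * c"
  shows "(a - c + 2) * (p + q) \<le> (p - q) * (a + c)"
proof (rule le_of_diff_eq_double_nonneg)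
  show "(p - q) * (a + c) - (a - c + 2) * (p + q) = 2 * (p * c - p - q * (a + 1))"
    by (simp add: algebra_simps)
  show "0 \<le> p * c - p - q * (a + 1)" using assms by linarith
qed

lemma weight_bound_ii_arith:
  fixes p q x sp sm ne m D c :: real
  assumes "sm + (p + q) + ne \<le> sp" "sp \<le> p * D" "sm + q \<le> 2 * x" "x + p \<le> p * c"
    "sp + sm = 2 * m"
  shows "(5 - 3 * D - 2 * c) * (p + q) + 2 * ne + 8 * m \<le> (p - q) * (3 * D + 2 * c - 1)"
proof (rule le_of_diff_eq_double_nonneg)
  show "(p - q) * (3 * D + 2 * c - 1) - ((5 - 3 * D - 2 * c) * (p + q) + 2 * ne + 8 * m)
      = 2 * (3 * (p * D) + 2 * (p * c) - 3 * p - 2 * q - ne - 4 * m)"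
    by (simp add: algebra_simps)
  show "0 \<le> 3 * (p * D) + 2 * (p * c) - 3 * p - 2 * q - ne - 4 * m" using assms by linarith
qed

lemma weight_bound_iii_arith:
  fixes p q x sp sm ne m d a c :: real
  assumes "q * (a + 1) \<le> x" "x + p \<le> p * c" "sm + (p + q) + ne \<le> sp" "q * d \<le> sm"
    "sp + sm = 2 * m" "d \<le> 2 * a + 1" "0 \<le> q"
  shows "(5 + 3 * d - 2 * c) * (p + q) + 2 * ne - 4 * m \<le> (p - q) * (3 * d + 2 * c - 1)"
proof (rule le_of_diff_eq_double_nonneg)
  show "(p - q) * (3 * d + 2 * c - 1) - ((5 + 3 * d - 2 * c) * (p + q) + 2 * ne - 4 * m)
      = 2 * (2 * (p * c) - 3 * p - 3 * (q * d) - 2 * q + 2 * m - ne)"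
    by (simp add: algebra_simps)
  have "q * d \<le> q * (2 * a + 1)" using assms(6,7) by (rule mult_left_mono)
  also have "\<dots> = 2 * (q * (a + 1)) - q" by (simp add: algebra_simps)
  finally show "0 \<le> 2 * (p * c) - 3 * p - 3 * (q * d) - 2 * q + 2 * m - ne"
    using assms(1-5) by linarith
qed

locale stdf =
  fixes V :: "'a set" and E :: "'a \<Rightarrow> 'a \<Rightarrow> bool" and f :: "'a \<Rightarrow> int"
  assumes graph: "simple_graph V E" and stdf: "is_STDF V E f"
begin

definition pos :: "'a set" where "pos = {v\<in>V. f v = 1}"
definition neg :: "'a set" where "neg = {v\<in>V. f v = -1}"

definition cross_edges :: nat where "cross_edges = (\<Sum>v\<in>neg. card (nbhd pos E v))"

lemma finite_V: "finite V"
  using graph by (simp add: simple_graph_def)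

lemma adj_sym: "E u v \<Longrightarrow> E v u"
  using graph by (simp add: simple_graph_def)

lemma V_eq_pos_Un_neg: "V = pos \<union> neg"
  using stdf unfolding is_STDF_def pos_def neg_def by auto

lemma pos_neg_disjoint: "pos \<inter> neg = {}"
  unfolding pos_def neg_def by auto

lemma finite_pos: "finite pos" and finite_neg: "finite neg"
  using finite_V by (auto simp: pos_def neg_def)

lemma sum_V_split: "(\<Sum>v\<in>V. g v) = (\<Sum>v\<in>pos. g v) + (\<Sum>v\<in>neg. g v)"
  by (subst V_eq_pos_Un_neg) (rule sum.union_disjoint[OF finite_pos finite_neg pos_neg_disjoint])

lemma card_V_eq: "card V = card pos + card neg"
  using sum_V_split[of "\<lambda>_. 1::nat"] by simp

lemma sum_degree_eq_sum_card_nbhd: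
  assumes "finite S"
  shows "(\<Sum>u\<in>S. degree V E u) = (\<Sum>v\<in>V. card (nbhd S E v))"
  unfolding degree_def by (rule sum_card_nbhd_swap[OF assms finite_V adj_sym])

lemma nbhd_eq_nbhd_pos_Un_neg: "nbhd V E v = nbhd pos E v \<union> nbhd neg E v"
  by (subst V_eq_pos_Un_neg) (auto simp: nbhd_def)

lemma nbhd_pos_neg_disjoint: "nbhd pos E v \<inter> nbhd neg E v = {}"
  using pos_neg_disjoint by (auto simp: nbhd_def)

lemma finite_nbhd_pos: "finite (nbhd pos E v)" and finite_nbhd_neg: "finite (nbhd neg E v)"
  using finite_pos finite_neg by (auto simp: nbhd_def)

lemma card_nbhd_pos_add_neg: "card (nbhd pos E v) + card (nbhd neg E v) = degree V E v"
  unfolding degree_def nbhd_eq_nbhd_pos_Un_neg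
  by (rule card_Un_disjoint[OF finite_nbhd_pos finite_nbhd_neg nbhd_pos_neg_disjoint, symmetric])

lemma card_nbhd_neg_less_pos:
  assumes "v \<in> V"
  shows "card (nbhd neg E v) < card (nbhd pos E v)"
proof -
  have "1 \<le> (\<Sum>u\<in>nbhd V E v. f u)"
    using stdf assms unfolding is_STDF_def by blast
  also have "\<dots> = (\<Sum>u\<in>nbhd pos E v. f u) + (\<Sum>u\<in>nbhd neg E v. f u)"
    unfolding nbhd_eq_nbhd_pos_Un_neg
    by (rule sum.union_disjoint[OF finite_nbhd_pos finite_nbhd_neg nbhd_pos_neg_disjoint])
  also have "\<dots> = int (card (nbhd pos E v)) - int (card (nbhd neg E v))"
    by (simp add: nbhd_def pos_def neg_def)
  finally show ?thesis by simp
qed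

text \<open>The two neighbourhood counts have sum, hence difference, of the parity of the degree.\<close>
lemma card_nbhd_neg_add_even_less_pos:
  assumes "v \<in> V"
  shows "card (nbhd neg E v) + 1 + (if even (degree V E v) then 1 else 0) \<le> card (nbhd pos E v)"
  using less_add_parity_le[OF card_nbhd_neg_less_pos[OF assms]]
  unfolding card_nbhd_pos_add_neg[symmetric] .

lemma cross_edges_eq: "cross_edges = (\<Sum>v\<in>pos. card (nbhd neg E v))"
  unfolding cross_edges_def using sum_card_nbhd_swap[OF finite_neg finite_pos adj_sym] .

lemma min_degree_div_2_less_card_nbhd_pos:
  assumes "v \<in> V"
  shows "min_degree V E div 2 + 1 \<le> card (nbhd pos E v)"
proof -
  have "d div 2 + 1 \<le> a" if "b < a" "d \<le> a + b" for a b d :: nat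
    using that by presburger
  then show ?thesis
    using min_degree_le_degree[OF finite_V assms] card_nbhd_neg_less_pos[OF assms]
      card_nbhd_pos_add_neg[of v] by simp
qed

lemma card_nbhd_neg_less_max_degree_ceil:
  assumes "v \<in> V"
  shows "card (nbhd neg E v) + 1 \<le> (max_degree V E + 1) div 2"
proof -
  have "b + 1 \<le> (D + 1) div 2" if "b < a" "a + b \<le> D" for a b D :: nat
    using that by presburger
  then show ?thesis
    using degree_le_max_degree[OF finite_V assms] card_nbhd_neg_less_pos[OF assms]
      card_nbhd_pos_add_neg[of v] by simp
qed

lemma card_neg_mult_le_cross_edges: "card neg * (min_degree V E div 2 + 1) \<le> cross_edges"
proof -
  have "min_degree V E div 2 + 1 \<le> card (nbhd pos E v)" if "v \<in> neg" for v
    using that min_degree_div_2_less_card_nbhd_pos by (simp add: neg_def)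
  from sum_bounded_below[of neg, OF this] show ?thesis unfolding cross_edges_def by simp
qed

lemma cross_edges_add_card_pos_le:
  "cross_edges + card pos \<le> card pos * ((max_degree V E + 1) div 2)"
proof -
  have "card (nbhd neg E v) + 1 \<le> (max_degree V E + 1) div 2" if "v \<in> pos" for v
    using that card_nbhd_neg_less_max_degree_ceil by (simp add: pos_def)
  then have "(\<Sum>v\<in>pos. card (nbhd neg E v) + 1) \<le> card pos * ((max_degree V E + 1) div 2)"
    using sum_bounded_above[of pos "\<lambda>v. card (nbhd neg E v) + 1"] by simp
  then show ?thesis by (simp only: cross_edges_eq sum.distrib card_eq_sum)
qed

lemma sum_degree_neg_add_card_neg_le_cross_edges:
  "(\<Sum>u\<in>neg. degree V E u) + card neg \<le> 2 * cross_edges"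
proof -
  have "(\<Sum>v\<in>neg. card (nbhd neg E v) + 1) \<le> cross_edges"
    unfolding cross_edges_def using card_nbhd_neg_less_pos
    by (intro sum_mono) (simp add: neg_def Suc_le_eq)
  then have "(\<Sum>v\<in>neg. card (nbhd neg E v)) + card neg \<le> cross_edges"
    by (simp only: sum.distrib card_eq_sum)
  moreover have "(\<Sum>u\<in>neg. degree V E u) = cross_edges + (\<Sum>v\<in>neg. card (nbhd neg E v))"
    unfolding sum_degree_eq_sum_card_nbhd[OF finite_neg] cross_edges_eq by (rule sum_V_split)
  ultimately show ?thesis by linarith
qed

lemma sum_degree_neg_add_le_sum_degree_pos:
  "(\<Sum>u\<in>neg. degree V E u) + card V + num_even_deg V E \<le> (\<Sum>u\<in>pos. degree V E u)"
proof -
  let ?e = "\<lambda>v. if even (degree V E v) then 1 else 0 :: nat"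
  have "(\<Sum>v\<in>V. card (nbhd neg E v) + 1 + ?e v) \<le> (\<Sum>v\<in>V. card (nbhd pos E v))"
    using card_nbhd_neg_add_even_less_pos by (rule sum_mono)
  moreover have "(\<Sum>v\<in>V. card (nbhd neg E v) + 1 + ?e v)
      = (\<Sum>v\<in>V. card (nbhd neg E v)) + card V + sum ?e V"
    by (simp only: sum.distrib card_eq_sum)
  moreover have "sum ?e V = num_even_deg V E"
    unfolding num_even_deg_def using sum.inter_filter[OF finite_V, of "\<lambda>_. 1::nat"] by simp
  ultimately show ?thesis
    unfolding sum_degree_eq_sum_card_nbhd[OF finite_pos] sum_degree_eq_sum_card_nbhd[OF finite_neg]
    by linarith
qed

lemma sum_degree_pos_add_neg:
  "(\<Sum>u\<in>pos. degree V E u) + (\<Sum>u\<in>neg. degree V E u) = 2 * num_edges V E"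
  using sum_V_split[of "degree V E"] sum_degree_eq_twice_num_edges[OF graph] by simp

lemma sum_degree_pos_le: "(\<Sum>u\<in>pos. degree V E u) \<le> card pos * max_degree V E"
  using sum_bounded_above[of pos "degree V E" "max_degree V E"]
    degree_le_max_degree[OF finite_V] by (simp add: pos_def)

lemma sum_degree_neg_ge: "card neg * min_degree V E \<le> (\<Sum>u\<in>neg. degree V E u)"
  using sum_bounded_below[of neg "min_degree V E" "degree V E"]
    min_degree_le_degree[OF finite_V] by (simp add: neg_def)

lemma real_weight_eq: "real_of_int (\<Sum>v\<in>V. f v) = real (card pos) - real (card neg)"
  by (simp add: sum_V_split pos_def neg_def)

lemma real_card_V_eq: "real (card V) = real (card pos) + real (card neg)"
  by (simp add: card_V_eq)

lemma real_counting_inequalities: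
  "real (card neg) * (real (min_degree V E div 2) + 1) \<le> real cross_edges"
  "real cross_edges + real (card pos) \<le> real (card pos) * real ((max_degree V E + 1) div 2)"
  "real (\<Sum>u\<in>neg. degree V E u) + real (card neg) \<le> 2 * real cross_edges"
  "real (\<Sum>u\<in>neg. degree V E u) + (real (card pos) + real (card neg)) + real (num_even_deg V E)
     \<le> real (\<Sum>u\<in>pos. degree V E u)"
  "real (\<Sum>u\<in>pos. degree V E u) \<le> real (card pos) * real (max_degree V E)"
  "real (card neg) * real (min_degree V E) \<le> real (\<Sum>u\<in>neg. degree V E u)"
  "real (\<Sum>u\<in>pos. degree V E u) + real (\<Sum>u\<in>neg. degree V E u) = 2 * real (num_edges V E)"
  using card_neg_mult_le_cross_edges cross_edges_add_card_pos_le
    sum_degree_neg_add_card_neg_le_cross_edges sum_degree_neg_add_le_sum_degree_pos[unfolded card_V_eq] sum_degree_pos_le sum_degree_neg_ge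
    sum_degree_pos_add_neg
  by (simp_all only: of_nat_le_iff[symmetric, where 'a=real] of_nat_add of_nat_mult of_nat_1
      of_nat_numeral flip: of_nat_eq_iff[where 'a=real])

lemma weight_lower_bound_i:
  "(real (min_degree V E div 2) - real ((max_degree V E + 1) div 2) + 2) * real (card V)
     \<le> real_of_int (\<Sum>v\<in>V. f v) * (real (min_degree V E div 2) + real ((max_degree V E + 1) div 2))"
  unfolding real_weight_eq real_card_V_eq
  using real_counting_inequalities(1,2) by (rule weight_bound_i_arith)

lemma weight_lower_bound_ii:
  "(5 - 3 * real (max_degree V E) - 2 * real ((max_degree V E + 1) div 2)) * real (card V)
     + 2 * real (num_even_deg V E) + 8 * real (num_edges V E)
   \<le> real_of_int (\<Sum>v\<in>V. f v) * (3 * real (max_degree V E) + 2 * real ((max_degree V E + 1) div 2) - 1)"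
  unfolding real_weight_eq real_card_V_eq
  using real_counting_inequalities(4,5,3,2,7) by (rule weight_bound_ii_arith)

lemma weight_lower_bound_iii:
  "(5 + 3 * real (min_degree V E) - 2 * real ((max_degree V E + 1) div 2)) * real (card V)
     + 2 * real (num_even_deg V E) - 4 * real (num_edges V E)
   \<le> real_of_int (\<Sum>v\<in>V. f v) * (3 * real (min_degree V E) + 2 * real ((max_degree V E + 1) div 2) - 1)"
proof -
  have "min_degree V E \<le> 2 * (min_degree V E div 2) + 1" by simp
  then have "real (min_degree V E) \<le> 2 * real (min_degree V E div 2) + 1" by linarith
  then show ?thesis
    unfolding real_weight_eq real_card_V_eq
    using real_counting_inequalities(1,2,4,6,7) by (intro weight_bound_iii_arith) simp_all
qed

end

definition K2_V :: "nat set" where "K2_V = {0, 1}"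
definition K2_E :: "nat \<Rightarrow> nat \<Rightarrow> bool" where
  "K2_E u v \<longleftrightarrow> u \<noteq> v \<and> u \<in> K2_V \<and> v \<in> K2_V"

lemma K2_facts:
  "simple_graph K2_V K2_E" "K2_V \<noteq> {}" "no_isolated K2_V K2_E" "card K2_V = 2"
  "min_degree K2_V K2_E = 1" "max_degree K2_V K2_E = 1"
  "num_edges K2_V K2_E = 1" "num_even_deg K2_V K2_E = 0" "gamma_st K2_V K2_E = 2"
proof -
  have nb: "nbhd K2_V K2_E v = (if v = 0 then {1} else {0})" if "v \<in> K2_V" for v
    using that unfolding nbhd_def K2_E_def K2_V_def by auto
  have deg: "degree K2_V K2_E v = 1" if "v \<in> K2_V" for v
    using nb[OF that] by (simp add: degree_def)
  then have deg_image: "degree K2_V K2_E ` K2_V = {1}"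
    unfolding K2_V_def by auto
  show "simple_graph K2_V K2_E" unfolding simple_graph_def K2_E_def K2_V_def by auto
  show "K2_V \<noteq> {}" "card K2_V = 2" unfolding K2_V_def by simp_all
  show "no_isolated K2_V K2_E" unfolding no_isolated_def using nb by simp
  show "min_degree K2_V K2_E = 1" "max_degree K2_V K2_E = 1"
    unfolding min_degree_def max_degree_def deg_image by simp_all
  have "{{u, v} | u v. u \<in> K2_V \<and> v \<in> K2_V \<and> K2_E u v} = {{0, 1}}"
    unfolding K2_E_def K2_V_def by auto
  then show "num_edges K2_V K2_E = 1" unfolding num_edges_def by simp
  have no_even: "{v \<in> K2_V. even (degree K2_V K2_E v)} = {}" using deg by auto
  show "num_even_deg K2_V K2_E = 0" unfolding num_even_deg_def no_even by simp
  have "{(\<Sum>v\<in>K2_V. f v) | f. is_STDF K2_V K2_E f} = {2}"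
  proof
    show "{(\<Sum>v\<in>K2_V. f v) | f. is_STDF K2_V K2_E f} \<subseteq> {2}"
    proof
      fix s assume "s \<in> {(\<Sum>v\<in>K2_V. f v) | f. is_STDF K2_V K2_E f}"
      then obtain f where f: "is_STDF K2_V K2_E f" and s: "s = (\<Sum>v\<in>K2_V. f v)" by auto
      have "0 \<in> K2_V" "(1::nat) \<in> K2_V" unfolding K2_V_def by auto
      \<comment> \<open>each vertex is the only neighbour of the other, so both must get the value \<open>1\<close>\<close>
      then have "f 1 \<ge> 1" "f 0 \<ge> 1" "f 0 \<le> 1" "f 1 \<le> 1"
        using f nb unfolding is_STDF_def by (auto split: if_splits)
      then show "s \<in> {2}" using s unfolding K2_V_def by simp
    qed
    have "is_STDF K2_V K2_E (\<lambda>_. 1)" unfolding is_STDF_def using nb by simp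
    then show "{2} \<subseteq> {(\<Sum>v\<in>K2_V. f v) | f. is_STDF K2_V K2_E f}" unfolding K2_V_def by force
  qed
  then show "gamma_st K2_V K2_E = 2" unfolding gamma_st_def by simp
qed

theorem theorem3p2:
  fixes V :: "'a set" and E :: "'a \<Rightarrow> 'a \<Rightarrow> bool"
  assumes "simple_graph V E" and "V \<noteq> {}" and "no_isolated V E"
  shows
   "(let n = real (card V); m = real (num_edges V E); ne = real (num_even_deg V E);
         fd = real (min_degree V E div 2); cD = real ((max_degree V E + 1) div 2);
         d = real (min_degree V E); D = real (max_degree V E)
     in real_of_int (gamma_st V E) \<ge> ((fd - cD + 2) * n) / (fd + cD)
      \<and> real_of_int (gamma_st V E) \<ge> ((5 - 3*D - 2*cD) * n + 2*ne + 8*m) / (3*D + 2*cD - 1)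
      \<and> real_of_int (gamma_st V E) \<ge> ((5 + 3*d - 2*cD) * n + 2*ne - 4*m) / (3*d + 2*cD - 1))
   \<and>
   (\<exists>(V1::nat set) E1. simple_graph V1 E1 \<and> V1 \<noteq> {} \<and> no_isolated V1 E1 \<and>
      real_of_int (gamma_st V1 E1) =
        ((real (min_degree V1 E1 div 2) - real ((max_degree V1 E1 + 1) div 2) + 2) * real (card V1))
        / (real (min_degree V1 E1 div 2) + real ((max_degree V1 E1 + 1) div 2)))
   \<and>
   (\<exists>(V2::nat set) E2. simple_graph V2 E2 \<and> V2 \<noteq> {} \<and> no_isolated V2 E2 \<and>
      real_of_int (gamma_st V2 E2) =
        ((5 - 3 * real (max_degree V2 E2) - 2 * real ((max_degree V2 E2 + 1) div 2)) * real (card V2)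
          + 2 * real (num_even_deg V2 E2) + 8 * real (num_edges V2 E2))
        / (3 * real (max_degree V2 E2) + 2 * real ((max_degree V2 E2 + 1) div 2) - 1))
   \<and>
   (\<exists>(V3::nat set) E3. simple_graph V3 E3 \<and> V3 \<noteq> {} \<and> no_isolated V3 E3 \<and>
      real_of_int (gamma_st V3 E3) =
        ((5 + 3 * real (min_degree V3 E3) - 2 * real ((max_degree V3 E3 + 1) div 2)) * real (card V3)
          + 2 * real (num_even_deg V3 E3) - 4 * real (num_edges V3 E3))
        / (3 * real (min_degree V3 E3) + 2 * real ((max_degree V3 E3 + 1) div 2) - 1))"
proof -
  obtain f where "is_STDF V E f" and gamma: "gamma_st V E = (\<Sum>v\<in>V. f v)"
    using gamma_st_attained assms(1,3) by blast
  then interpret stdf V E f using assms(1) by unfold_locales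
  have "1 \<le> min_degree V E"
    using min_degree_pos[OF finite_V assms(2,3)] by simp
  moreover have "min_degree V E \<le> max_degree V E"
    by (rule min_degree_le_max_degree[OF finite_V assms(2)])
  ultimately have "1 \<le> real (min_degree V E)" "1 \<le> real (max_degree V E)"
    "1 \<le> real ((max_degree V E + 1) div 2)"
    by simp_all
  then have denominators_pos:
    "0 < real (min_degree V E div 2) + real ((max_degree V E + 1) div 2)"
    "0 < 3 * real (max_degree V E) + 2 * real ((max_degree V E + 1) div 2) - 1"
    "0 < 3 * real (min_degree V E) + 2 * real ((max_degree V E + 1) div 2) - 1"
    by simp_all
  have K2_witness: "\<exists>(V1::nat set) E1. simple_graph V1 E1 \<and> V1 \<noteq> {} \<and> no_isolated V1 E1 \<and> P V1 E1"
    if "P K2_V K2_E" for P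
    using K2_facts(1-3) that by blast
  show ?thesis
    unfolding Let_def gamma
    by (intro conjI pos_divide_le_eq[THEN iffD2] denominators_pos K2_witness
        weight_lower_bound_i weight_lower_bound_ii weight_lower_bound_iii) (simp_all add: K2_facts)
qed

end
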